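(* Let $p:V\to X$ be a smooth map between diffeological spaces, and suppose that each fibre of $p$ has a (real) vector space structure. Then there is a smallest diffeology $\mathcal{D}$ on $V$ which contains the given diffeology on $V$ and which makes $V$ (with $p$ and the given fibrewise vector space structures) into a diffeological vector space over $X$.
   Context: A diffeological space is a set with, for every open subset $U$ of every $\mathbb{R}^n$, a set of maps $U\to X$ called plots, containing constants, closed under precomposition with smooth maps between open subsets of Euclidean spaces, and satisfying the sheaf condition; smooth maps send plots to plots; diffeologies on a set are ordered by inclusion. A diffeological vector space over $X$ is a diffeological space $V$ with a smooth map $p:V\to X$ and a vector space structure on each fibre $p^{-1}(x)$ such that fibrewise addition $V\times_X V\to V$, scalar multiplication $\mathbb{R}\times V\to V$ and the zero section $X\to V$ are smooth, where $\mathbb{R}\times V$ has the product diffeology and $V\times_X V$ the sub-diffeology of $V\times V$. *)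

theory Defs
  imports "HOL-Analysis.Analysis"
begin

text \<open>Euclidean space R^n, modelled as the functions nat => real vanishing from index n on.
  Its topology is the subspace topology of the product topology, i.e. the Euclidean one.\<close>
definition Eucl :: "nat \<Rightarrow> (nat \<Rightarrow> real) set" where
  "Eucl n = {x. \<forall>i\<ge>n. x i = 0}"

definition open_in_Eucl :: "nat \<Rightarrow> (nat \<Rightarrow> real) set \<Rightarrow> bool" where
  "open_in_Eucl n U \<longleftrightarrow> openin (top_of_set (Eucl n)) U"

definition pd :: "nat \<Rightarrow> ((nat \<Rightarrow> real) \<Rightarrow> real) \<Rightarrow> (nat \<Rightarrow> real) \<Rightarrow> real" where
  "pd i f x = deriv (\<lambda>t. f (x(i := x i + t))) 0"

fun Ck :: "nat \<Rightarrow> nat \<Rightarrow> (nat \<Rightarrow> real) set \<Rightarrow> ((nat \<Rightarrow> real) \<Rightarrow> real) \<Rightarrow> bool" where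
  "Ck 0 n U f = continuous_on U f"
| "Ck (Suc k) n U f =
     (continuous_on U f \<and>
      (\<forall>i<n. \<forall>x\<in>U. (\<lambda>t. f (x(i := x i + t))) differentiable (at 0)) \<and>
      (\<forall>i<n. Ck k n U (pd i f)))"

definition smooth_fun :: "nat \<Rightarrow> (nat \<Rightarrow> real) set \<Rightarrow> ((nat \<Rightarrow> real) \<Rightarrow> real) \<Rightarrow> bool" where
  "smooth_fun n U f \<longleftrightarrow> (\<forall>k. Ck k n U f)"

definition smooth_eucl_map ::
  "nat \<Rightarrow> nat \<Rightarrow> (nat \<Rightarrow> real) set \<Rightarrow> (nat \<Rightarrow> real) set \<Rightarrow> ((nat \<Rightarrow> real) \<Rightarrow> (nat \<Rightarrow> real)) \<Rightarrow> bool" where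
  "smooth_eucl_map m n W U g \<longleftrightarrow> g ` W \<subseteq> U \<and> (\<forall>j<n. smooth_fun m W (\<lambda>x. g x j))"

text \<open>A diffeology on a set S: D n U is the set of plots with domain the open set U of R^n
  (only values on U matter).\<close>
type_synonym 'a diffeology = "nat \<Rightarrow> (nat \<Rightarrow> real) set \<Rightarrow> ((nat \<Rightarrow> real) \<Rightarrow> 'a) set"

definition diffeology :: "'a set \<Rightarrow> 'a diffeology \<Rightarrow> bool" where
  "diffeology S D \<longleftrightarrow>
     (\<forall>n U \<phi>. \<phi> \<in> D n U \<longrightarrow> open_in_Eucl n U \<and> \<phi> ` U \<subseteq> S) \<and>
     (\<forall>n U \<phi> \<psi>. \<phi> \<in> D n U \<and> (\<forall>x\<in>U. \<psi> x = \<phi> x) \<longrightarrow> \<psi> \<in> D n U) \<and>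
     (\<forall>n U c. open_in_Eucl n U \<and> c \<in> S \<longrightarrow> (\<lambda>_. c) \<in> D n U) \<and>
     (\<forall>m n W U g \<phi>. open_in_Eucl m W \<and> \<phi> \<in> D n U \<and> smooth_eucl_map m n W U g
        \<longrightarrow> \<phi> \<circ> g \<in> D m W) \<and>
     (\<forall>n U \<phi>. open_in_Eucl n U \<and> \<phi> ` U \<subseteq> S \<and>
        (\<forall>x\<in>U. \<exists>W. open_in_Eucl n W \<and> x \<in> W \<and> W \<subseteq> U \<and> \<phi> \<in> D n W)
        \<longrightarrow> \<phi> \<in> D n U)"

definition diffeology_le :: "'a diffeology \<Rightarrow> 'a diffeology \<Rightarrow> bool" where
  "diffeology_le D D' \<longleftrightarrow> (\<forall>n U. D n U \<subseteq> D' n U)"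

definition smooth_map :: "'a diffeology \<Rightarrow> 'b diffeology \<Rightarrow> ('a \<Rightarrow> 'b) \<Rightarrow> bool" where
  "smooth_map DA DB f \<longleftrightarrow> (\<forall>n U \<phi>. \<phi> \<in> DA n U \<longrightarrow> f \<circ> \<phi> \<in> DB n U)"

definition fibre :: "'v set \<Rightarrow> ('v \<Rightarrow> 'x) \<Rightarrow> 'x \<Rightarrow> 'v set" where
  "fibre V p x = {v \<in> V. p v = x}"

definition vector_space_on ::
  "'v set \<Rightarrow> ('v \<Rightarrow> 'v \<Rightarrow> 'v) \<Rightarrow> (real \<Rightarrow> 'v \<Rightarrow> 'v) \<Rightarrow> 'v \<Rightarrow> bool" where
  "vector_space_on F add smul z \<longleftrightarrow>
     z \<in> F \<and>
     (\<forall>u\<in>F. \<forall>w\<in>F. add u w \<in> F) \<and>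
     (\<forall>a. \<forall>u\<in>F. smul a u \<in> F) \<and>
     (\<forall>u\<in>F. \<forall>v\<in>F. \<forall>w\<in>F. add (add u v) w = add u (add v w)) \<and>
     (\<forall>u\<in>F. \<forall>w\<in>F. add u w = add w u) \<and>
     (\<forall>u\<in>F. add u z = u) \<and>
     (\<forall>u\<in>F. \<exists>w\<in>F. add u w = z) \<and>
     (\<forall>a. \<forall>u\<in>F. \<forall>w\<in>F. smul a (add u w) = add (smul a u) (smul a w)) \<and>
     (\<forall>a b. \<forall>u\<in>F. smul (a + b) u = add (smul a u) (smul b u)) \<and>
     (\<forall>a b. \<forall>u\<in>F. smul a (smul b u) = smul (a * b) u) \<and>
     (\<forall>u\<in>F. smul 1 u = u)"

text \<open>Diffeological vector space over X: p smooth, fibres are vector spaces, and fibrewise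
  addition (on V \<times>_X V with the subset diffeology of the product diffeology), scalar
  multiplication (on R \<times> V, R with its standard diffeology of smooth functions) and the
  zero section are smooth.\<close>
definition diffeological_vector_space ::
  "'x set \<Rightarrow> 'x diffeology \<Rightarrow> 'v set \<Rightarrow> 'v diffeology \<Rightarrow> ('v \<Rightarrow> 'x)
   \<Rightarrow> ('x \<Rightarrow> 'v \<Rightarrow> 'v \<Rightarrow> 'v) \<Rightarrow> ('x \<Rightarrow> real \<Rightarrow> 'v \<Rightarrow> 'v) \<Rightarrow> ('x \<Rightarrow> 'v) \<Rightarrow> bool" where
  "diffeological_vector_space X DX V D p add smul zero \<longleftrightarrow>
     p ` V \<subseteq> X \<and> smooth_map D DX p \<and>
     (\<forall>x\<in>X. vector_space_on (fibre V p x) (add x) (smul x) (zero x)) \<and>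
     (\<forall>n U \<phi> \<psi>. \<phi> \<in> D n U \<and> \<psi> \<in> D n U \<and> (\<forall>r\<in>U. p (\<phi> r) = p (\<psi> r))
        \<longrightarrow> (\<lambda>r. add (p (\<phi> r)) (\<phi> r) (\<psi> r)) \<in> D n U) \<and>
     (\<forall>n U c \<phi>. open_in_Eucl n U \<and> smooth_fun n U c \<and> \<phi> \<in> D n U
        \<longrightarrow> (\<lambda>r. smul (p (\<phi> r)) (c r) (\<phi> r)) \<in> D n U) \<and>
     (\<forall>n U \<psi>. \<psi> \<in> DX n U \<longrightarrow> (\<lambda>r. zero (\<psi> r)) \<in> D n U)"

end

theory Submission
  imports Defs
begin

text \<open>The admissible diffeologies (diffeological vector space structures containing the given
  diffeology) are closed under arbitrary nonempty intersections, since every axiom only asks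
  that certain maps built from plots be plots again. The family is nonempty: the pullback along
  p of the diffeology of X is admissible, because fibrewise addition, scalar multiplication and
  the zero section do not move points between fibres.\<close>

lemma diffeologyD:
  assumes "diffeology S D"
  shows diffeology_plotD: "\<And>n U \<phi>. \<phi> \<in> D n U \<Longrightarrow> open_in_Eucl n U \<and> \<phi> ` U \<subseteq> S"
    and diffeology_plot_cong: "\<And>n U \<phi> \<psi>. \<phi> \<in> D n U \<Longrightarrow> \<forall>x\<in>U. \<psi> x = \<phi> x \<Longrightarrow> \<psi> \<in> D n U"
    and diffeology_const_plot: "\<And>n U c. open_in_Eucl n U \<Longrightarrow> c \<in> S \<Longrightarrow> (\<lambda>_. c) \<in> D n U"
    and diffeology_plot_comp: "\<And>m n W U g \<phi>. open_in_Eucl m W \<Longrightarrow> \<phi> \<in> D n U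
      \<Longrightarrow> smooth_eucl_map m n W U g \<Longrightarrow> \<phi> \<circ> g \<in> D m W"
    and diffeology_plot_local: "\<And>n U \<phi>. open_in_Eucl n U \<Longrightarrow> \<phi> ` U \<subseteq> S
      \<Longrightarrow> \<forall>x\<in>U. \<exists>W. open_in_Eucl n W \<and> x \<in> W \<and> W \<subseteq> U \<and> \<phi> \<in> D n W
      \<Longrightarrow> \<phi> \<in> D n U"
  using assms unfolding diffeology_def by meson+

lemma diffeologyI:
  assumes "\<And>n U \<phi>. \<phi> \<in> D n U \<Longrightarrow> open_in_Eucl n U \<and> \<phi> ` U \<subseteq> S"
    and "\<And>n U \<phi> \<psi>. \<phi> \<in> D n U \<Longrightarrow> \<forall>x\<in>U. \<psi> x = \<phi> x \<Longrightarrow> \<psi> \<in> D n U"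
    and "\<And>n U c. open_in_Eucl n U \<Longrightarrow> c \<in> S \<Longrightarrow> (\<lambda>_. c) \<in> D n U"
    and "\<And>m n W U g \<phi>. open_in_Eucl m W \<Longrightarrow> \<phi> \<in> D n U \<Longrightarrow> smooth_eucl_map m n W U g
           \<Longrightarrow> \<phi> \<circ> g \<in> D m W"
    and "\<And>n U \<phi>. open_in_Eucl n U \<Longrightarrow> \<phi> ` U \<subseteq> S
           \<Longrightarrow> \<forall>x\<in>U. \<exists>W. open_in_Eucl n W \<and> x \<in> W \<and> W \<subseteq> U \<and> \<phi> \<in> D n W
           \<Longrightarrow> \<phi> \<in> D n U"
  shows "diffeology S D"
  unfolding diffeology_def using assms by meson

lemma diffeological_vector_spaceI:
  assumes "p ` V \<subseteq> X" and "smooth_map D DX p"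
    and "\<forall>x\<in>X. vector_space_on (fibre V p x) (add x) (smul x) (zero x)"
    and "\<And>n U \<phi> \<psi>. \<phi> \<in> D n U \<Longrightarrow> \<psi> \<in> D n U \<Longrightarrow> \<forall>r\<in>U. p (\<phi> r) = p (\<psi> r)
           \<Longrightarrow> (\<lambda>r. add (p (\<phi> r)) (\<phi> r) (\<psi> r)) \<in> D n U"
    and "\<And>n U c \<phi>. open_in_Eucl n U \<Longrightarrow> smooth_fun n U c \<Longrightarrow> \<phi> \<in> D n U
           \<Longrightarrow> (\<lambda>r. smul (p (\<phi> r)) (c r) (\<phi> r)) \<in> D n U"
    and "\<And>n U \<psi>. \<psi> \<in> DX n U \<Longrightarrow> (\<lambda>r. zero (\<psi> r)) \<in> D n U"
  shows "diffeological_vector_space X DX V D p add smul zero"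
  unfolding diffeological_vector_space_def using assms by meson

lemma diffeological_vector_spaceD:
  assumes "diffeological_vector_space X DX V D p add smul zero"
  shows "p ` V \<subseteq> X"
    and "smooth_map D DX p"
    and "\<forall>x\<in>X. vector_space_on (fibre V p x) (add x) (smul x) (zero x)"
    and diffeological_vector_space_add_plot: "\<And>n U \<phi> \<psi>. \<phi> \<in> D n U \<Longrightarrow> \<psi> \<in> D n U
      \<Longrightarrow> \<forall>r\<in>U. p (\<phi> r) = p (\<psi> r) \<Longrightarrow> (\<lambda>r. add (p (\<phi> r)) (\<phi> r) (\<psi> r)) \<in> D n U"
    and diffeological_vector_space_smul_plot: "\<And>n U c \<phi>. open_in_Eucl n U \<Longrightarrow> smooth_fun n U c
      \<Longrightarrow> \<phi> \<in> D n U \<Longrightarrow> (\<lambda>r. smul (p (\<phi> r)) (c r) (\<phi> r)) \<in> D n U"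
    and diffeological_vector_space_zero_plot: "\<And>n U \<psi>. \<psi> \<in> DX n U
      \<Longrightarrow> (\<lambda>r. zero (\<psi> r)) \<in> D n U"
  using assms unfolding diffeological_vector_space_def by meson+

definition Inter_diffeology :: "'a diffeology set \<Rightarrow> 'a diffeology" where
  "Inter_diffeology \<D> = (\<lambda>n U. {\<phi>. \<forall>D\<in>\<D>. \<phi> \<in> D n U})"

lemma mem_Inter_diffeology [simp]:
  "\<phi> \<in> Inter_diffeology \<D> n U \<longleftrightarrow> (\<forall>D\<in>\<D>. \<phi> \<in> D n U)"
  unfolding Inter_diffeology_def by simp

lemma Inter_diffeology_le: "D \<in> \<D> \<Longrightarrow> diffeology_le (Inter_diffeology \<D>) D"
  unfolding diffeology_le_def by auto

lemma le_Inter_diffeology: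
  "(\<And>D. D \<in> \<D> \<Longrightarrow> diffeology_le D' D) \<Longrightarrow> diffeology_le D' (Inter_diffeology \<D>)"
  unfolding diffeology_le_def subset_iff mem_Inter_diffeology by blast

lemma diffeology_Inter_diffeology:
  assumes "\<D> \<noteq> {}" and diff: "\<And>D. D \<in> \<D> \<Longrightarrow> diffeology S D"
  shows "diffeology S (Inter_diffeology \<D>)"
proof (rule diffeologyI)
  fix n U \<phi>
  assume "\<phi> \<in> Inter_diffeology \<D> n U"
  moreover obtain D where "D \<in> \<D>"
    using \<open>\<D> \<noteq> {}\<close> by blast
  ultimately have "\<phi> \<in> D n U"
    by simp
  then show "open_in_Eucl n U \<and> \<phi> ` U \<subseteq> S"
    using diffeology_plotD[OF diff[OF \<open>D \<in> \<D>\<close>]] by blast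
next
  fix n U \<phi> \<psi>
  assume "\<phi> \<in> Inter_diffeology \<D> n U" and "\<forall>x\<in>U. \<psi> x = \<phi> x"
  then show "\<psi> \<in> Inter_diffeology \<D> n U"
    using diffeology_plot_cong[OF diff] by auto
next
  fix n U c
  assume "open_in_Eucl n U" and "c \<in> S"
  then show "(\<lambda>_. c) \<in> Inter_diffeology \<D> n U"
    using diffeology_const_plot[OF diff] by auto
next
  fix m n W U g \<phi>
  assume "open_in_Eucl m W" and "\<phi> \<in> Inter_diffeology \<D> n U" and "smooth_eucl_map m n W U g"
  then show "\<phi> \<circ> g \<in> Inter_diffeology \<D> m W"
    using diffeology_plot_comp[OF diff] by auto
next
  fix n U \<phi>
  assume "open_in_Eucl n U" and "\<phi> ` U \<subseteq> S"
    and local: "\<forall>x\<in>U. \<exists>W. open_in_Eucl n W \<and> x \<in> W \<and> W \<subseteq> U \<and> \<phi> \<in> Inter_diffeology \<D> n W"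
  show "\<phi> \<in> Inter_diffeology \<D> n U"
  proof (simp, intro ballI)
    fix D
    assume "D \<in> \<D>"
    with local have "\<forall>x\<in>U. \<exists>W. open_in_Eucl n W \<and> x \<in> W \<and> W \<subseteq> U \<and> \<phi> \<in> D n W"
      unfolding mem_Inter_diffeology by blast
    then show "\<phi> \<in> D n U"
      using diffeology_plot_local[OF diff[OF \<open>D \<in> \<D>\<close>] \<open>open_in_Eucl n U\<close> \<open>\<phi> ` U \<subseteq> S\<close>] by blast
  qed
qed

lemma diffeological_vector_space_Inter_diffeology:
  assumes "\<D> \<noteq> {}"
    and dvs: "\<And>D. D \<in> \<D> \<Longrightarrow> diffeological_vector_space X DX V D p add smul zero"
  shows "diffeological_vector_space X DX V (Inter_diffeology \<D>) p add smul zero"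
proof -
  obtain D0 where "D0 \<in> \<D>"
    using \<open>\<D> \<noteq> {}\<close> by blast
  note D0 = diffeological_vector_spaceD(1-3)[OF dvs[OF \<open>D0 \<in> \<D>\<close>]]
  show ?thesis
  proof (rule diffeological_vector_spaceI[OF D0(1) _ D0(3)])
    show "smooth_map (Inter_diffeology \<D>) DX p"
      using D0(2) \<open>D0 \<in> \<D>\<close> unfolding smooth_map_def by simp
  next
    fix n U \<phi> \<psi>
    assume "\<phi> \<in> Inter_diffeology \<D> n U" and "\<psi> \<in> Inter_diffeology \<D> n U"
      and "\<forall>r\<in>U. p (\<phi> r) = p (\<psi> r)"
    then show "(\<lambda>r. add (p (\<phi> r)) (\<phi> r) (\<psi> r)) \<in> Inter_diffeology \<D> n U"
      using diffeological_vector_space_add_plot[OF dvs] by simp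
  next
    fix n U c \<phi>
    assume "open_in_Eucl n U" and "smooth_fun n U c" and "\<phi> \<in> Inter_diffeology \<D> n U"
    then show "(\<lambda>r. smul (p (\<phi> r)) (c r) (\<phi> r)) \<in> Inter_diffeology \<D> n U"
      using diffeological_vector_space_smul_plot[OF dvs] by simp
  next
    fix n U \<psi>
    assume "\<psi> \<in> DX n U"
    then show "(\<lambda>r. zero (\<psi> r)) \<in> Inter_diffeology \<D> n U"
      using diffeological_vector_space_zero_plot[OF dvs] by simp
  qed
qed

definition pullback_diffeology :: "'v set \<Rightarrow> ('v \<Rightarrow> 'x) \<Rightarrow> 'x diffeology \<Rightarrow> 'v diffeology" where
  "pullback_diffeology V p DX =
     (\<lambda>n U. {\<phi>. open_in_Eucl n U \<and> \<phi> ` U \<subseteq> V \<and> p \<circ> \<phi> \<in> DX n U})"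

lemma mem_pullback_diffeology:
  "\<phi> \<in> pullback_diffeology V p DX n U \<longleftrightarrow> open_in_Eucl n U \<and> \<phi> ` U \<subseteq> V \<and> p \<circ> \<phi> \<in> DX n U"
  unfolding pullback_diffeology_def by simp

lemma pullback_diffeology_same_fibres:
  assumes dX: "diffeology X DX" and \<phi>: "\<phi> \<in> pullback_diffeology V p DX n U"
    and "\<psi> ` U \<subseteq> V" and same_fibre: "\<forall>r\<in>U. p (\<psi> r) = p (\<phi> r)"
  shows "\<psi> \<in> pullback_diffeology V p DX n U"
proof -
  have "p \<circ> \<psi> \<in> DX n U"
    using diffeology_plot_cong[OF dX, of "p \<circ> \<phi>" n U "p \<circ> \<psi>"] \<phi> same_fibre
    by (simp add: mem_pullback_diffeology)
  with \<phi> \<open>\<psi> ` U \<subseteq> V\<close> show ?thesis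
    by (simp add: mem_pullback_diffeology)
qed

lemma diffeology_pullback_diffeology:
  assumes dX: "diffeology X DX" and pV: "p ` V \<subseteq> X"
  shows "diffeology V (pullback_diffeology V p DX)"
proof (rule diffeologyI)
  fix n U \<phi> \<psi>
  assume \<phi>: "\<phi> \<in> pullback_diffeology V p DX n U" and "\<forall>x\<in>U. \<psi> x = \<phi> x"
  moreover from this have "\<psi> ` U \<subseteq> V"
    by (auto simp: mem_pullback_diffeology)
  ultimately show "\<psi> \<in> pullback_diffeology V p DX n U"
    by (intro pullback_diffeology_same_fibres[OF dX \<phi>]) auto
next
  fix n U c
  assume "open_in_Eucl n U" and "c \<in> V"
  moreover from this have "p \<circ> (\<lambda>_. c) \<in> DX n U"
    using diffeology_const_plot[OF dX, of n U "p c"] pV by (auto simp: comp_def)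
  ultimately show "(\<lambda>_. c) \<in> pullback_diffeology V p DX n U"
    by (auto simp: mem_pullback_diffeology)
next
  fix m n W U g \<phi>
  assume "open_in_Eucl m W" and \<phi>: "\<phi> \<in> pullback_diffeology V p DX n U"
    and g: "smooth_eucl_map m n W U g"
  have "(p \<circ> \<phi>) \<circ> g \<in> DX m W"
    using diffeology_plot_comp[OF dX \<open>open_in_Eucl m W\<close> _ g] \<phi>
    by (simp add: mem_pullback_diffeology)
  moreover have "(\<phi> \<circ> g) ` W \<subseteq> V"
    using \<phi> g by (auto simp: mem_pullback_diffeology smooth_eucl_map_def)
  ultimately show "\<phi> \<circ> g \<in> pullback_diffeology V p DX m W"
    using \<open>open_in_Eucl m W\<close> by (simp add: mem_pullback_diffeology comp_assoc)
next
  fix n U \<phi>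
  assume "open_in_Eucl n U" and "\<phi> ` U \<subseteq> V"
    and local: "\<forall>x\<in>U. \<exists>W. open_in_Eucl n W \<and> x \<in> W \<and> W \<subseteq> U \<and> \<phi> \<in> pullback_diffeology V p DX n W"
  have "(p \<circ> \<phi>) ` U \<subseteq> X"
    using \<open>\<phi> ` U \<subseteq> V\<close> pV by (auto simp: image_comp [symmetric])
  moreover have "\<forall>x\<in>U. \<exists>W. open_in_Eucl n W \<and> x \<in> W \<and> W \<subseteq> U \<and> p \<circ> \<phi> \<in> DX n W"
    using local unfolding mem_pullback_diffeology by meson
  ultimately have "p \<circ> \<phi> \<in> DX n U"
    using diffeology_plot_local[OF dX \<open>open_in_Eucl n U\<close>] by blast
  with \<open>open_in_Eucl n U\<close> \<open>\<phi> ` U \<subseteq> V\<close> show "\<phi> \<in> pullback_diffeology V p DX n U"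
    by (simp add: mem_pullback_diffeology)
qed (simp add: mem_pullback_diffeology)

lemma le_pullback_diffeology:
  "diffeology V DV \<Longrightarrow> smooth_map DV DX p \<Longrightarrow> diffeology_le DV (pullback_diffeology V p DX)"
  unfolding diffeology_le_def smooth_map_def by (auto simp: mem_pullback_diffeology dest: diffeology_plotD)

lemma vector_space_on_closed:
  assumes "vector_space_on F add smul z"
  shows "u \<in> F \<Longrightarrow> w \<in> F \<Longrightarrow> add u w \<in> F"
    and "u \<in> F \<Longrightarrow> smul a u \<in> F"
    and "z \<in> F"
  using assms by (simp_all add: vector_space_on_def)

lemma fibrewise_operations_closed:
  assumes pV: "p ` V \<subseteq> X"
    and vs: "\<forall>x\<in>X. vector_space_on (fibre V p x) (add x) (smul x) (zero x)"
  shows "u \<in> V \<Longrightarrow> w \<in> V \<Longrightarrow> p w = p u \<Longrightarrow> add (p u) u w \<in> V \<and> p (add (p u) u w) = p u"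
    and "u \<in> V \<Longrightarrow> smul (p u) a u \<in> V \<and> p (smul (p u) a u) = p u"
    and "x \<in> X \<Longrightarrow> zero x \<in> V \<and> p (zero x) = x"
proof -
  have fibre_vs: "vector_space_on (fibre V p (p u)) (add (p u)) (smul (p u)) (zero (p u))"
    if "u \<in> V" for u
    using vs that pV by (simp add: image_subset_iff)
  {
    assume "u \<in> V" and "w \<in> V" and "p w = p u"
    then have "add (p u) u w \<in> fibre V p (p u)"
      by (intro vector_space_on_closed(1)[OF fibre_vs]) (auto simp: fibre_def)
    then show "add (p u) u w \<in> V \<and> p (add (p u) u w) = p u"
      by (simp add: fibre_def)
  next
    assume "u \<in> V"
    then have "smul (p u) a u \<in> fibre V p (p u)"
      by (intro vector_space_on_closed(2)[OF fibre_vs]) (auto simp: fibre_def)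
    then show "smul (p u) a u \<in> V \<and> p (smul (p u) a u) = p u"
      by (simp add: fibre_def)
  next
    assume "x \<in> X"
    with vs have "zero x \<in> fibre V p x"
      by (blast intro: vector_space_on_closed(3))
    then show "zero x \<in> V \<and> p (zero x) = x"
      by (simp add: fibre_def)
  }
qed

lemma diffeological_vector_space_pullback_diffeology:
  assumes dX: "diffeology X DX" and pV: "p ` V \<subseteq> X"
    and vs: "\<forall>x\<in>X. vector_space_on (fibre V p x) (add x) (smul x) (zero x)"
  shows "diffeological_vector_space X DX V (pullback_diffeology V p DX) p add smul zero"
proof (rule diffeological_vector_spaceI[OF pV _ vs])
  show "smooth_map (pullback_diffeology V p DX) DX p"
    unfolding smooth_map_def by (simp add: mem_pullback_diffeology)
next
  fix n U \<phi> \<psi>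
  assume \<phi>: "\<phi> \<in> pullback_diffeology V p DX n U" and \<psi>: "\<psi> \<in> pullback_diffeology V p DX n U"
    and "\<forall>r\<in>U. p (\<phi> r) = p (\<psi> r)"
  then have "add (p (\<phi> r)) (\<phi> r) (\<psi> r) \<in> V \<and> p (add (p (\<phi> r)) (\<phi> r) (\<psi> r)) = p (\<phi> r)"
    if "r \<in> U" for r
    using that fibrewise_operations_closed(1)[OF pV vs, of "\<phi> r" "\<psi> r"]
    by (auto simp: mem_pullback_diffeology)
  then show "(\<lambda>r. add (p (\<phi> r)) (\<phi> r) (\<psi> r)) \<in> pullback_diffeology V p DX n U"
    by (intro pullback_diffeology_same_fibres[OF dX \<phi>]) auto
next
  fix n U c \<phi>
  assume \<phi>: "\<phi> \<in> pullback_diffeology V p DX n U"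
  then have "smul (p (\<phi> r)) (c r) (\<phi> r) \<in> V \<and> p (smul (p (\<phi> r)) (c r) (\<phi> r)) = p (\<phi> r)"
    if "r \<in> U" for r
    using that fibrewise_operations_closed(2)[OF pV vs, of "\<phi> r"]
    by (auto simp: mem_pullback_diffeology)
  then show "(\<lambda>r. smul (p (\<phi> r)) (c r) (\<phi> r)) \<in> pullback_diffeology V p DX n U"
    by (intro pullback_diffeology_same_fibres[OF dX \<phi>]) auto
next
  fix n U \<psi>
  assume \<psi>: "\<psi> \<in> DX n U"
  then have "open_in_Eucl n U" and "\<psi> ` U \<subseteq> X"
    using diffeology_plotD[OF dX] by blast+
  then have "zero (\<psi> r) \<in> V \<and> p (zero (\<psi> r)) = \<psi> r" if "r \<in> U" for r
    using that fibrewise_operations_closed(3)[OF pV vs] by blast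
  moreover have "p \<circ> (\<lambda>r. zero (\<psi> r)) \<in> DX n U"
    using diffeology_plot_cong[OF dX \<psi>] calculation by simp
  ultimately show "(\<lambda>r. zero (\<psi> r)) \<in> pullback_diffeology V p DX n U"
    using \<open>open_in_Eucl n U\<close> by (auto simp: mem_pullback_diffeology)
qed

theorem proposition4p6:
  fixes X :: "'x set" and DX :: "'x diffeology"
    and V :: "'v set" and DV :: "'v diffeology"
    and p :: "'v \<Rightarrow> 'x"
    and add :: "'x \<Rightarrow> 'v \<Rightarrow> 'v \<Rightarrow> 'v" and smul :: "'x \<Rightarrow> real \<Rightarrow> 'v \<Rightarrow> 'v"
    and zero :: "'x \<Rightarrow> 'v"
  assumes "diffeology X DX" and "diffeology V DV"
    and "p ` V \<subseteq> X" and "smooth_map DV DX p"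
    and "\<forall>x\<in>X. vector_space_on (fibre V p x) (add x) (smul x) (zero x)"
  shows "\<exists>D. diffeology V D \<and> diffeology_le DV D
           \<and> diffeological_vector_space X DX V D p add smul zero
           \<and> (\<forall>D'. diffeology V D' \<and> diffeology_le DV D'
                  \<and> diffeological_vector_space X DX V D' p add smul zero
                  \<longrightarrow> diffeology_le D D')"
proof -
  define \<D> where "\<D> = {D. diffeology V D \<and> diffeology_le DV D
                          \<and> diffeological_vector_space X DX V D p add smul zero}"
  have mem_\<D>: "D \<in> \<D> \<longleftrightarrow> diffeology V D \<and> diffeology_le DV D
                          \<and> diffeological_vector_space X DX V D p add smul zero" for D
    unfolding \<D>_def by simp
  have "pullback_diffeology V p DX \<in> \<D>"
    unfolding mem_\<D>
    using diffeology_pullback_diffeology[OF assms(1,3)] le_pullback_diffeology[OF assms(2,4)]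
      diffeological_vector_space_pullback_diffeology[OF assms(1,3,5)] by simp
  then have "\<D> \<noteq> {}"
    by blast
  have "diffeology V (Inter_diffeology \<D>)"
    by (rule diffeology_Inter_diffeology[OF \<open>\<D> \<noteq> {}\<close>]) (simp add: mem_\<D>)
  moreover have "diffeology_le DV (Inter_diffeology \<D>)"
    by (rule le_Inter_diffeology) (simp add: mem_\<D>)
  moreover have "diffeological_vector_space X DX V (Inter_diffeology \<D>) p add smul zero"
    by (rule diffeological_vector_space_Inter_diffeology[OF \<open>\<D> \<noteq> {}\<close>]) (simp add: mem_\<D>)
  moreover have "diffeology_le (Inter_diffeology \<D>) D'" if "D' \<in> \<D>" for D'
    using that by (rule Inter_diffeology_le)
  ultimately show ?thesis
    unfolding mem_\<D> by blast
qed

end
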